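(* Let $p$ be a prime and $e_1\ge e_2$ positive integers with $e=e_1+e_2$ and $p\nmid(e-1)(e_1-1)(e_2-1)$. Let $pw$ be the smallest multiple of $p$ that is $\ge e_1$. Suppose $\lfloor\frac{e-1}{p}\rfloor>\lfloor\frac{e_1-1}{p}\rfloor+\lfloor\frac{e_2-1}{p}\rfloor$. Then $p\nmid\binom{e_2-1}{pw-e_1}$, $p\nmid\binom{e_2-1}{pw-e_1+1}$, and $p\nmid Z$, where $Z=\sum_{k=0}^{pw-e_1}\binom{e_2-1}{k}(-1)^{e_2-1-k}$. *)

theory Defs
  imports "HOL-Computational_Algebra.Primes"
begin

end

theory Submission
  imports Defs
begin

text \<open>Write \<open>e\<^sub>1 - 1 = p A + r\<close> and \<open>e\<^sub>2 - 1 = p B + s\<close> with \<open>0 \<le> r, s < p\<close>. The floor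
  hypothesis says that adding \<open>e\<^sub>1 - 1\<close>, \<open>e\<^sub>2 - 1\<close> and \<open>1\<close> produces a carry in the last
  base-\<open>p\<close> digit, and since \<open>p \<nmid> e - 1\<close> this forces \<open>r + s \<ge> p\<close>. The least multiple of
  \<open>p\<close> above \<open>e\<^sub>1\<close> is \<open>p (A + 1)\<close>, so \<open>t = p w - e\<^sub>1 = p - 1 - r\<close> and hence \<open>t + 1 \<le> s\<close>.
  Now \<open>p \<nmid> (n choose k)\<close> whenever \<open>k \<le> n mod p\<close>, because the numerator of
  \<open>(n choose k) = n (n - 1) \<dots> (n - k + 1) / k!\<close> has no factor divisible by \<open>p\<close>.
  This gives the two binomial coefficients, and the alternating partial sum \<open>Z\<close>
  telescopes by Pascal's rule to \<open>\<plusminus>(e\<^sub>2 - 2 choose t)\<close>, where \<open>(e\<^sub>2 - 2) mod p = s - 1 \<ge> t\<close>.\<close>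

lemma prime_not_dvd_choose_le_mod:
  fixes p n k :: nat
  assumes "prime p" and "k \<le> n mod p"
  shows "\<not> p dvd (n choose k)"
  using assms(2)
proof (induction k)
  case 0
  then show ?case using assms(1) by auto
next
  case (Suc k)
  have IH: "\<not> p dvd (n choose k)" using Suc by simp
  have n_minus_k: "n - k = p * (n div p) + (n mod p - k)"
    using Suc.prems div_mult_mod_eq[of n p] by (simp add: mult.commute)
  have "n mod p < p"
    using assms(1) by (simp add: prime_gt_0_nat)
  then have "(n - k) mod p = n mod p - k"
    unfolding n_minus_k by simp
  then have "\<not> p dvd (n - k)"
    using Suc.prems by (simp add: dvd_eq_mod_eq_0)
  then have "\<not> p dvd ((n - k) * (n choose k))"
    using IH assms(1) prime_dvd_mult_iff by blast
  moreover have "(n - k) * (n choose k) = Suc k * (n choose Suc k)"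
    by (simp only: binomial_absorption binomial_absorb_comp)
  ultimately show ?case by (metis dvd_mult)
qed

lemma diff_1_mod_eq:
  fixes n p :: nat
  assumes "n mod p \<noteq> 0"
  shows "(n - 1) mod p = n mod p - 1"
  using assms by (cases n) (auto simp: mod_Suc)

lemma sum_choose_alternating_partial:
  assumes "m \<le> n"
  shows "(\<Sum>k = 0..m. of_nat (n choose k) * (-1) ^ (n - k) :: 'a::comm_ring_1)
    = (-1) ^ (n - m) * of_nat ((n - 1) choose m)"
  using assms
proof (induction m)
  case 0
  then show ?case by simp
next
  case (Suc m)
  then obtain c where n: "n = Suc c" and "m \<le> c"
    by (cases n) auto
  have "(\<Sum>k = 0..Suc m. of_nat (n choose k) * (-1) ^ (n - k) :: 'a)
      = (-1) ^ (n - m) * of_nat (c choose m) + of_nat (n choose Suc m) * (-1) ^ (n - Suc m)"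
    using Suc by (simp add: n)
  also have "\<dots> = (-1) ^ (n - Suc m) * of_nat (c choose Suc m)"
    by (simp add: n Suc_diff_le[OF \<open>m \<le> c\<close>] algebra_simps)
  finally show ?case by (simp add: n)
qed

lemma Least_dvd_ge_eq:
  fixes p n :: nat
  assumes "p > 0" and "n \<ge> 1"
  shows "(LEAST m. p dvd m \<and> m \<ge> n) = n + (p - 1 - (n - 1) mod p)"
proof -
  have "(n - 1) mod p < p" and digits: "p * ((n - 1) div p) + (n - 1) mod p = n - 1"
    using assms(1) by simp_all
  have "(LEAST m. p dvd m \<and> m \<ge> n) = p * ((n - 1) div p + 1)"
  proof (rule Least_equality)
    have "n \<le> p * ((n - 1) div p) + p"
      using \<open>(n - 1) mod p < p\<close> digits assms(2) by linarith
    then show "p dvd p * ((n - 1) div p + 1) \<and> p * ((n - 1) div p + 1) \<ge> n"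
      by (simp add: distrib_left)
  next
    fix m
    assume "p dvd m \<and> m \<ge> n"
    then obtain q where m: "m = p * q" and "p * q \<ge> n"
      by auto
    then have "p * ((n - 1) div p) < p * q"
      using assms(2) digits by linarith
    then have "(n - 1) div p + 1 \<le> q"
      by simp
    then show "p * ((n - 1) div p + 1) \<le> m"
      unfolding m by (rule mult_le_mono2)
  qed
  also have "\<dots> = n + (p - 1 - (n - 1) mod p)"
    unfolding distrib_left mult_1_right using \<open>(n - 1) mod p < p\<close> digits assms(2) by arith
  finally show ?thesis .
qed

lemma carry_mod_add_ge:
  fixes a b p :: nat
  assumes carry: "a div p + b div p < (a + b + 1) div p"
    and "\<not> p dvd (a + b + 1)"
  shows "p \<le> a mod p + b mod p"
proof -
  have "p > 0"
    using carry by (cases p) auto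
  have digits: "a + b + 1 = (a mod p + b mod p + 1) + a div p * p + b div p * p"
    using mod_div_mult_eq[of a p] mod_div_mult_eq[of b p] by linarith
  then have "(a + b + 1) div p = ((a mod p + b mod p + 1) + (a div p + b div p) * p) div p"
    by (simp add: algebra_simps)
  also have "\<dots> = a div p + b div p + (a mod p + b mod p + 1) div p"
    by (rule div_mult_self1) (use \<open>p > 0\<close> in simp)
  finally have "(a + b + 1) div p = a div p + b div p + (a mod p + b mod p + 1) div p" .
  with carry have "(a mod p + b mod p + 1) div p \<noteq> 0"
    by linarith
  then have "p \<le> a mod p + b mod p + 1"
    using div_less not_less by blast
  moreover have "a mod p + b mod p + 1 \<noteq> p"
  proof
    assume "a mod p + b mod p + 1 = p"
    then have "a + b + 1 = p * (a div p + b div p + 1)"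
      using digits by (simp add: algebra_simps)
    with assms(2) show False by simp
  qed
  ultimately show ?thesis by simp
qed

theorem lemma5p4:
  fixes p e1 e2 e w :: nat
  assumes "prime p"
    and "e1 \<ge> e2" and "e2 \<ge> 1"
    and "e = e1 + e2"
    and "\<not> p dvd ((e - 1) * (e1 - 1) * (e2 - 1))"
    and "p * w = (LEAST m. p dvd m \<and> m \<ge> e1)"
    and "(e - 1) div p > (e1 - 1) div p + (e2 - 1) div p"
  shows "\<not> p dvd ((e2 - 1) choose (p * w - e1)) \<and>
         \<not> p dvd ((e2 - 1) choose (p * w - e1 + 1)) \<and>
         \<not> (int p) dvd (\<Sum>k = 0..p * w - e1. int ((e2 - 1) choose k) * (-1) ^ (e2 - 1 - k))"
proof -
  define r s where "r = (e1 - 1) mod p" and "s = (e2 - 1) mod p"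
  have "p > 0"
    using assms(1) by (simp add: prime_gt_0_nat)
  then have "r < p" and "s \<le> e2 - 1"
    unfolding r_def s_def by simp_all
  have "p \<le> r + s"
  proof -
    have "e - 1 = (e1 - 1) + (e2 - 1) + 1"
      using assms(2-4) by arith
    moreover have "\<not> p dvd (e - 1)"
      using assms(5) by (auto intro: dvd_mult2)
    ultimately show ?thesis
      unfolding r_def s_def using carry_mod_add_ge assms(7) by simp
  qed
  have "p * w - e1 = p - 1 - r"
    using assms(2,3,6) Least_dvd_ge_eq[OF \<open>p > 0\<close>, of e1] unfolding r_def by simp
  with \<open>p \<le> r + s\<close> \<open>r < p\<close> have t_bound: "p * w - e1 + 1 \<le> s"
    by linarith
  then have "p * w - e1 \<le> (e2 - 1 - 1) mod p"
    using diff_1_mod_eq[of "e2 - 1" p] unfolding s_def by linarith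
  then have "\<not> p dvd ((e2 - 1 - 1) choose (p * w - e1))"
    by (rule prime_not_dvd_choose_le_mod[OF assms(1)])
  moreover have "(\<Sum>k = 0..p * w - e1. int ((e2 - 1) choose k) * (-1) ^ (e2 - 1 - k))
      = (-1) ^ (e2 - 1 - (p * w - e1)) * int ((e2 - 1 - 1) choose (p * w - e1))"
    by (rule sum_choose_alternating_partial) (use t_bound \<open>s \<le> e2 - 1\<close> in linarith)
  ultimately show ?thesis
    using prime_not_dvd_choose_le_mod[OF assms(1)] t_bound unfolding s_def
    by (simp add: dvd_mult_unit_iff' is_unit_power_iff)
qed

end
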